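(* For $\varepsilon\in[0,1]$, let $C(\varepsilon)$ be the infimum of the Chernoff information $C(P,Q)$ over all pairs of probability distributions $P,Q$ (on a common countable set) with $d_{\mathrm{TV}}(P,Q)=\varepsilon$. Then this infimum is attained (it is a minimum) and $$C(\varepsilon)=\begin{cases}-\tfrac12\log(1-\varepsilon^2), & \varepsilon\in[0,1),\\ +\infty, & \varepsilon=1.\end{cases}$$ For $\varepsilon\in[0,1)$ the minimum is achieved by the 2-element distributions $P=\left(\frac{1-\varepsilon}{2},\frac{1+\varepsilon}{2}\right)$, $Q=\left(\frac{1+\varepsilon}{2},\frac{1-\varepsilon}{2}\right)$.
   Context: For probability distributions $P,Q$ on a common countable set: the total variation distance is $d_{\mathrm{TV}}(P,Q)=\frac12\sum_x |P(x)-Q(x)|$, and the Chernoff information is $C(P,Q)=-\min_{\lambda\in[0,1]}\log\left(\sum_x P(x)^{\lambda}Q(x)^{1-\lambda}\right)$ (with $\log 0=-\infty$, so $C(P,Q)$ may be $+\infty$). Logarithms are natural. *)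

theory Defs
  imports "HOL-Probability.Probability"
begin

text \<open>Probability distributions on a common countable set are modelled as
  probability mass functions on nat (every countable set injects into nat).\<close>

definition tv_dist :: "nat pmf \<Rightarrow> nat pmf \<Rightarrow> real" where
  "tv_dist P Q = (1/2) * (\<Sum>\<^sub>\<infinity>x. \<bar>pmf P x - pmf Q x\<bar>)"

definition elog :: "real \<Rightarrow> ereal" where
  "elog s = (if s = 0 then -\<infinity> else ereal (ln s))"

definition bhatt_sum :: "nat pmf \<Rightarrow> nat pmf \<Rightarrow> real \<Rightarrow> real" where
  "bhatt_sum P Q l = (\<Sum>\<^sub>\<infinity>x. pmf P x powr l * pmf Q x powr (1 - l))"

definition chernoff :: "nat pmf \<Rightarrow> nat pmf \<Rightarrow> ereal" where
  "chernoff P Q = - (INF l\<in>{0..1}. elog (bhatt_sum P Q l))"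

definition chernoff_min :: "real \<Rightarrow> ereal" where
  "chernoff_min \<epsilon> = (INF PQ\<in>{(P, Q). tv_dist P Q = \<epsilon>}. chernoff (fst PQ) (snd PQ))"

end

theory Submission
  imports Defs
begin

(* The proof compares the Chernoff information with its value at lambda = 1/2.

   Restricting the infimum defining C(P,Q) to lambda = 1/2 gives
   C(P,Q) >= -log B(P,Q), where B(P,Q) = sum_x sqrt (P x * Q x) is the
   Bhattacharyya coefficient.  Writing |P x - Q x| as the product of
   |sqrt (P x) - sqrt (Q x)| and sqrt (P x) + sqrt (Q x), Cauchy-Schwarz yields
   (2 d_TV)^2 <= (2 - 2B)(2 + 2B), i.e. B^2 <= 1 - d_TV^2; hence
   C(P,Q) >= -(1/2) log (1 - eps^2), and C(P,Q) = +infinity when eps = 1.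

   For the antipodal two-point pair P = ((1-eps)/2, (1+eps)/2),
   Q = ((1+eps)/2, (1-eps)/2), writing a = (1-eps)/2 and b = (1+eps)/2, the sum
   over x equals a^l b^(1-l) + b^l a^(1-l),
   which by AM-GM is at least 2 sqrt (a b) = sqrt (1 - eps^2), with equality
   at l = 1/2; so this pair attains the lower bound. *)

section \<open>A Hellinger-type estimate for nonnegative sums\<close>

text \<open>Finite version: the l1 distance of p and q is controlled by their total masses
  and the Bhattacharyya sum, by Cauchy-Schwarz applied to the factorisation
  |p - q| = |sqrt p - sqrt q| * (sqrt p + sqrt q).\<close>

lemma sum_abs_diff_sq_le:
  fixes p q :: "'a \<Rightarrow> real"
  assumes p0: "\<And>x. p x \<ge> 0" and q0: "\<And>x. q x \<ge> 0"
  shows "(\<Sum>x\<in>A. \<bar>p x - q x\<bar>)\<^sup>2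
           \<le> ((\<Sum>x\<in>A. p x) + (\<Sum>x\<in>A. q x))\<^sup>2 - 4 * (\<Sum>x\<in>A. sqrt (p x * q x))\<^sup>2"
proof -
  define g where "g x = sqrt (p x * q x)" for x
  define a where "a x = \<bar>sqrt (p x) - sqrt (q x)\<bar>" for x
  define b where "b x = sqrt (p x) + sqrt (q x)" for x
  have root_prod: "sqrt (p x) * sqrt (q x) = g x" for x
    by (simp add: g_def real_sqrt_mult)
  have ab: "a x * b x = \<bar>p x - q x\<bar>" for x
  proof -
    have "a x * b x = \<bar>(sqrt (p x) - sqrt (q x)) * (sqrt (p x) + sqrt (q x))\<bar>"
      using p0[of x] q0[of x] by (simp add: a_def b_def abs_mult)
    also have "(sqrt (p x) - sqrt (q x)) * (sqrt (p x) + sqrt (q x)) = p x - q x"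
      using p0[of x] q0[of x] by (simp add: algebra_simps)
    finally show ?thesis .
  qed
  have a2: "(a x)\<^sup>2 = p x + q x - 2 * g x" for x
    using p0[of x] q0[of x] root_prod[of x] by (simp add: a_def power2_eq_square algebra_simps)
  have b2: "(b x)\<^sup>2 = p x + q x + 2 * g x" for x
    using p0[of x] q0[of x] root_prod[of x] by (simp add: b_def power2_eq_square algebra_simps)
  have "(\<Sum>x\<in>A. \<bar>p x - q x\<bar>)\<^sup>2 \<le> (\<Sum>x\<in>A. (a x)\<^sup>2) * (\<Sum>x\<in>A. (b x)\<^sup>2)"
    using Cauchy_Schwarz_ineq_sum[of a b A] by (simp add: ab)
  also have "\<dots> = ((\<Sum>x\<in>A. p x) + (\<Sum>x\<in>A. q x))\<^sup>2 - 4 * (\<Sum>x\<in>A. g x)\<^sup>2"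
  proof -
    have "(\<Sum>x\<in>A. (a x)\<^sup>2) = (\<Sum>x\<in>A. p x) + (\<Sum>x\<in>A. q x) - 2 * (\<Sum>x\<in>A. g x)"
      by (simp add: a2 sum.distrib sum_subtractf sum_distrib_left)
    moreover have "(\<Sum>x\<in>A. (b x)\<^sup>2) = (\<Sum>x\<in>A. p x) + (\<Sum>x\<in>A. q x) + 2 * (\<Sum>x\<in>A. g x)"
      by (simp add: b2 sum.distrib sum_distrib_left)
    ultimately show ?thesis by (simp only:) (simp add: power2_eq_square algebra_simps)
  qed
  finally show ?thesis by (simp add: g_def)
qed

lemma series_abs_diff_sq_le:
  fixes p q :: "nat \<Rightarrow> real"
  assumes "\<And>n. p n \<ge> 0" "\<And>n. q n \<ge> 0"
    and "p sums s" "q sums t"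
    and "(\<lambda>n. \<bar>p n - q n\<bar>) sums d" "(\<lambda>n. sqrt (p n * q n)) sums g"
  shows "d\<^sup>2 \<le> (s + t)\<^sup>2 - 4 * g\<^sup>2"
proof (rule LIMSEQ_le)
  show "(\<lambda>n. (\<Sum>i<n. \<bar>p i - q i\<bar>)\<^sup>2) \<longlonglongrightarrow> d\<^sup>2"
    using assms(5) unfolding sums_def by (intro tendsto_intros)
  show "(\<lambda>n. ((\<Sum>i<n. p i) + (\<Sum>i<n. q i))\<^sup>2 - 4 * (\<Sum>i<n. sqrt (p i * q i))\<^sup>2)
          \<longlonglongrightarrow> (s + t)\<^sup>2 - 4 * g\<^sup>2"
    using assms(3,4,6) unfolding sums_def by (intro tendsto_intros)
  show "\<exists>N. \<forall>n\<ge>N. (\<Sum>i<n. \<bar>p i - q i\<bar>)\<^sup>2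
          \<le> ((\<Sum>i<n. p i) + (\<Sum>i<n. q i))\<^sup>2 - 4 * (\<Sum>i<n. sqrt (p i * q i))\<^sup>2"
    using sum_abs_diff_sq_le[of p q, OF assms(1,2)] by blast
qed

section \<open>The Bhattacharyya coefficient and the lower bound\<close>

text \<open>A probability mass function is summable with total mass 1; the sums in the
  definitions are unconditional sums, which for nat coincide with ordinary series.\<close>

lemma pmf_summable_on: "pmf P summable_on A"
proof -
  have "Infinite_Sum.abs_summable_on (pmf P) A"
    using abs_summable_equivalent pmf_abs_summable by blast
  then show ?thesis by simp
qed

lemma pmf_sums_one: "pmf P sums 1"
proof -
  have "infsum (pmf P) UNIV = 1"
    using infsetsum_infsum[OF pmf_abs_summable, of P UNIV] infsetsum_pmf_eq_1[of P UNIV] by simp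
  then show ?thesis
    using has_sum_imp_sums[OF has_sum_infsum[OF pmf_summable_on[of P UNIV]]] by simp
qed

lemma bhatt_sum_half: "bhatt_sum P Q (1/2) = (\<Sum>\<^sub>\<infinity>x. sqrt (pmf P x * pmf Q x))"
  unfolding bhatt_sum_def by (intro infsum_cong) (simp add: powr_half_sqrt real_sqrt_mult)

lemma bhattacharyya_tv_bound: "(bhatt_sum P Q (1/2))\<^sup>2 \<le> 1 - (tv_dist P Q)\<^sup>2"
proof -
  define p where "p = pmf P"
  define q where "q = pmf Q"
  have p0: "\<And>x. p x \<ge> 0" and q0: "\<And>x. q x \<ge> 0" by (simp_all add: p_def q_def)
  have mass: "(\<lambda>x. p x + q x) summable_on UNIV"
    unfolding p_def q_def by (intro summable_on_add pmf_summable_on)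
  have "(\<lambda>x. sqrt (p x * q x)) summable_on UNIV"
  proof (rule summable_on_comparison_test[OF mass])
    fix x
    have "sqrt (p x * q x) \<le> (p x + q x) / 2" by (rule arith_geo_mean_sqrt[OF p0 q0])
    then show "sqrt (p x * q x) \<le> p x + q x" using p0[of x] q0[of x] by simp
  qed (simp add: p0 q0)
  then have g: "(\<lambda>x. sqrt (p x * q x)) sums bhatt_sum P Q (1/2)"
    by (simp add: has_sum_imp_sums has_sum_infsum bhatt_sum_half p_def q_def)
  have "(\<lambda>x. \<bar>p x - q x\<bar>) summable_on UNIV"
    by (rule summable_on_comparison_test[OF mass]) (auto simp: p0 q0 abs_le_iff)
  then have d: "(\<lambda>x. \<bar>p x - q x\<bar>) sums (2 * tv_dist P Q)"
    by (simp add: has_sum_imp_sums has_sum_infsum tv_dist_def p_def q_def)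
  have "(2 * tv_dist P Q)\<^sup>2 \<le> (1 + 1)\<^sup>2 - 4 * (bhatt_sum P Q (1/2))\<^sup>2"
    using series_abs_diff_sq_le[OF p0 q0 pmf_sums_one[of P, folded p_def]
        pmf_sums_one[of Q, folded q_def] d g] by simp
  then show ?thesis by (simp add: power_mult_distrib)
qed

lemma chernoff_ge_bhattacharyya: "- elog (bhatt_sum P Q (1/2)) \<le> chernoff P Q"
proof -
  have "(INF l\<in>{0..1}. elog (bhatt_sum P Q l)) \<le> elog (bhatt_sum P Q (1/2))"
    by (rule INF_lower) auto
  then show ?thesis unfolding chernoff_def by (simp add: ereal_uminus_le_reorder)
qed

definition chernoff_tv_value :: "real \<Rightarrow> ereal" where
  "chernoff_tv_value \<epsilon> = (if \<epsilon> < 1 then ereal (- (1/2) * ln (1 - \<epsilon>\<^sup>2)) else \<infinity>)"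

lemma chernoff_lower_bound:
  assumes "0 \<le> tv_dist P Q"
  shows "chernoff_tv_value (tv_dist P Q) \<le> chernoff P Q"
proof -
  define B where "B = bhatt_sum P Q (1/2)"
  define \<epsilon> where "\<epsilon> = tv_dist P Q"
  have B2: "B\<^sup>2 \<le> 1 - \<epsilon>\<^sup>2" using bhattacharyya_tv_bound by (simp add: B_def \<epsilon>_def)
  have "B \<ge> 0" unfolding B_def bhatt_sum_half by (rule infsum_nonneg) auto
  have ch: "- elog B \<le> chernoff P Q" using chernoff_ge_bhattacharyya by (simp add: B_def)
  show ?thesis
  proof (cases "B = 0")
    case True
    then show ?thesis using ch by (simp add: elog_def)
  next
    case False
    with \<open>B \<ge> 0\<close> have "B > 0" by simp
    with B2 have "\<epsilon>\<^sup>2 < 1" by (smt (verit) zero_less_power)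
    with assms have "\<epsilon> < 1" by (simp add: \<epsilon>_def abs_square_less_1)
    have "2 * ln B = ln (B\<^sup>2)" using \<open>B > 0\<close> by (simp add: ln_realpow)
    also have "\<dots> \<le> ln (1 - \<epsilon>\<^sup>2)" using B2 \<open>B > 0\<close> by (simp add: ln_mono)
    finally have "ereal (- (1/2) * ln (1 - \<epsilon>\<^sup>2)) \<le> - elog B"
      using \<open>B > 0\<close> by (simp add: elog_def)
    then show ?thesis using ch \<open>\<epsilon> < 1\<close> by (simp add: chernoff_tv_value_def \<epsilon>_def)
  qed
qed

section \<open>The antipodal two-point pair\<close>

definition antipodal_pair :: "real \<Rightarrow> nat pmf \<Rightarrow> nat pmf \<Rightarrow> bool" where
  "antipodal_pair \<epsilon> P Q \<longleftrightarrow>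
     pmf P 0 = (1 - \<epsilon>) / 2 \<and> pmf P 1 = (1 + \<epsilon>) / 2 \<and>
     pmf Q 0 = (1 + \<epsilon>) / 2 \<and> pmf Q 1 = (1 - \<epsilon>) / 2"

lemma antipodal_pair_exists:
  assumes "0 \<le> \<epsilon>" "\<epsilon> \<le> 1"
  shows "\<exists>P Q. antipodal_pair \<epsilon> P Q"
proof -
  define ps where "ps = [(0::nat, (1 - \<epsilon>) / 2), (1, (1 + \<epsilon>) / 2)]"
  define qs where "qs = [(0::nat, (1 + \<epsilon>) / 2), (1, (1 - \<epsilon>) / 2)]"
  have "pmf_of_list_wf ps" "pmf_of_list_wf qs"
    using assms by (auto intro!: pmf_of_list_wfI simp: ps_def qs_def field_simps)
  then have "antipodal_pair \<epsilon> (pmf_of_list ps) (pmf_of_list qs)"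
    by (simp add: antipodal_pair_def pmf_pmf_of_list ps_def qs_def)
  then show ?thesis by blast
qed

lemma pmf_zero_outside:
  assumes "finite A" "sum (pmf P) A = 1" "x \<notin> A"
  shows "pmf P x = 0"
proof -
  have "sum (pmf P) (insert x A) \<le> 1"
    using assms(1) measure_measure_pmf_finite[of "insert x A" P]
    by (metis finite_insert measure_pmf.prob_le_1)
  then show ?thesis using assms pmf_nonneg[of P x] by simp
qed

lemma antipodal_pair_infsum:
  assumes "antipodal_pair \<epsilon> P Q" "F 0 0 = 0"
  shows "(\<Sum>\<^sub>\<infinity>x. F (pmf P x) (pmf Q x) :: real)
           = F ((1 - \<epsilon>) / 2) ((1 + \<epsilon>) / 2) + F ((1 + \<epsilon>) / 2) ((1 - \<epsilon>) / 2)"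
proof -
  have "sum (pmf P) {0, 1} = 1" "sum (pmf Q) {0, 1} = 1"
    using assms(1) by (simp_all add: antipodal_pair_def field_simps)
  then have "F (pmf P x) (pmf Q x) = 0" if "x \<notin> {0, 1}" for x
    using pmf_zero_outside[OF _ _ that] assms(2) by simp
  then have "(\<Sum>\<^sub>\<infinity>x. F (pmf P x) (pmf Q x)) = (\<Sum>x\<in>{0, 1::nat}. F (pmf P x) (pmf Q x))"
    by (subst infsum_cong_neutral[where T = "{0, 1}"]) auto
  also have "\<dots> = F (pmf P 0) (pmf Q 0) + F (pmf P 1) (pmf Q 1)"
    by simp
  finally show ?thesis
    using assms(1) unfolding antipodal_pair_def by (simp only:)
qed

lemma antipodal_pair_tv:
  assumes "antipodal_pair \<epsilon> P Q" "0 \<le> \<epsilon>"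
  shows "tv_dist P Q = \<epsilon>"
  using antipodal_pair_infsum[OF assms(1), of "\<lambda>u v. \<bar>u - v\<bar>"] assms(2)
  by (simp add: tv_dist_def)

text \<open>AM-GM: the two-term sum a^l b^(1-l) + b^l a^(1-l) is at least 2 sqrt (a b),
  which is the value at l = 1/2.\<close>

lemma powr_mix_ge:
  fixes a b l :: real
  assumes "a > 0" "b > 0"
  shows "2 * sqrt (a * b) \<le> a powr l * b powr (1 - l) + b powr l * a powr (1 - l)"
proof -
  have "(a powr l * b powr (1 - l)) * (b powr l * a powr (1 - l))
          = (a * b) powr l * (a * b) powr (1 - l)"
    using assms by (simp add: powr_mult)
  also have "\<dots> = a * b" using assms by (simp add: powr_add[symmetric])
  finally show ?thesis
    using arith_geo_mean_sqrt[of "a powr l * b powr (1 - l)" "b powr l * a powr (1 - l)"] by simp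
qed

lemma antipodal_pair_chernoff:
  assumes "antipodal_pair \<epsilon> P Q" "0 \<le> \<epsilon>" "\<epsilon> < 1"
  shows "chernoff P Q = ereal (- (1/2) * ln (1 - \<epsilon>\<^sup>2))"
proof -
  define a where "a = (1 - \<epsilon>) / 2"
  define b where "b = (1 + \<epsilon>) / 2"
  define m where "m = 2 * sqrt (a * b)"
  have "a > 0" "b > 0" using assms by (simp_all add: a_def b_def)
  then have "m > 0" by (simp add: m_def)
  have "a * b = (1 - \<epsilon>\<^sup>2) / 4"
    by (simp add: a_def b_def power2_eq_square field_simps)
  then have m_eq: "m = sqrt (1 - \<epsilon>\<^sup>2)"
    unfolding m_def by (simp only:) (simp add: real_sqrt_divide)
  have bs: "bhatt_sum P Q l = a powr l * b powr (1 - l) + b powr l * a powr (1 - l)" for l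
    unfolding bhatt_sum_def a_def b_def
    by (rule antipodal_pair_infsum[OF assms(1), of "\<lambda>u v. u powr l * v powr (1 - l)"]) simp
  have half: "bhatt_sum P Q (1/2) = m"
    using \<open>a > 0\<close> \<open>b > 0\<close> by (simp add: bs m_def powr_half_sqrt real_sqrt_mult)
  have "(INF l\<in>{0..1}. elog (bhatt_sum P Q l)) = elog m"
  proof (rule antisym)
    show "(INF l\<in>{0..1}. elog (bhatt_sum P Q l)) \<le> elog m"
      by (intro INF_lower2[of "1/2"]) (auto simp: half)
    show "elog m \<le> (INF l\<in>{0..1}. elog (bhatt_sum P Q l))"
    proof (rule INF_greatest)
      fix l
      have "m \<le> bhatt_sum P Q l"
        unfolding bs m_def by (rule powr_mix_ge[OF \<open>a > 0\<close> \<open>b > 0\<close>])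
      then show "elog m \<le> elog (bhatt_sum P Q l)" using \<open>m > 0\<close> by (simp add: elog_def)
    qed
  qed
  moreover have "ln m = (1/2) * ln (1 - \<epsilon>\<^sup>2)"
    using \<open>m > 0\<close> unfolding m_eq by (subst ln_sqrt) auto
  ultimately show ?thesis using \<open>m > 0\<close> by (simp add: chernoff_def elog_def)
qed

text \<open>For every eps in [0,1] the antipodal pair attains the value; at eps = 1 this is
  forced by the lower bound.\<close>

lemma antipodal_pair_attains:
  assumes "antipodal_pair \<epsilon> P Q" "0 \<le> \<epsilon>" "\<epsilon> \<le> 1"
  shows "chernoff P Q = chernoff_tv_value \<epsilon>"
proof (cases "\<epsilon> < 1")
  case True
  then show ?thesis
    using antipodal_pair_chernoff[OF assms(1,2)] by (simp add: chernoff_tv_value_def)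
next
  case False
  then show ?thesis
    using chernoff_lower_bound[of P Q] antipodal_pair_tv[OF assms(1,2)] assms(2)
    by (simp add: chernoff_tv_value_def)
qed

lemma chernoff_min_eqI:
  assumes "\<And>P Q. tv_dist P Q = \<epsilon> \<Longrightarrow> V \<le> chernoff P Q"
    and "tv_dist P0 Q0 = \<epsilon>" "chernoff P0 Q0 = V"
  shows "chernoff_min \<epsilon> = V"
  unfolding chernoff_min_def
proof (rule antisym)
  show "(INF PQ\<in>{(P, Q). tv_dist P Q = \<epsilon>}. chernoff (fst PQ) (snd PQ)) \<le> V"
    using assms(2,3) by (intro INF_lower2[of "(P0, Q0)"]) auto
  show "V \<le> (INF PQ\<in>{(P, Q). tv_dist P Q = \<epsilon>}. chernoff (fst PQ) (snd PQ))"
    using assms(1) by (intro INF_greatest) auto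
qed

theorem proposition2:
  fixes \<epsilon> :: real
  assumes "0 \<le> \<epsilon>" and "\<epsilon> \<le> 1"
  shows "chernoff_min \<epsilon> =
           (if \<epsilon> < 1 then ereal (- (1/2) * ln (1 - \<epsilon>\<^sup>2)) else \<infinity>)
     \<and> (\<exists>P Q. tv_dist P Q = \<epsilon> \<and> chernoff P Q = chernoff_min \<epsilon>)
     \<and> (\<epsilon> < 1 \<longrightarrow>
          (\<forall>P Q. pmf P 0 = (1 - \<epsilon>) / 2 \<and> pmf P 1 = (1 + \<epsilon>) / 2 \<and>
                 pmf Q 0 = (1 + \<epsilon>) / 2 \<and> pmf Q 1 = (1 - \<epsilon>) / 2 \<longrightarrow>
                 tv_dist P Q = \<epsilon> \<and> chernoff P Q = chernoff_min \<epsilon>))"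
proof -
  obtain P0 Q0 where pair: "antipodal_pair \<epsilon> P0 Q0"
    using antipodal_pair_exists[OF assms] by blast
  have lower: "chernoff_tv_value \<epsilon> \<le> chernoff P Q" if "tv_dist P Q = \<epsilon>" for P Q
    using chernoff_lower_bound[of P Q] that assms(1) by simp
  have min: "chernoff_min \<epsilon> = chernoff_tv_value \<epsilon>"
    using chernoff_min_eqI[OF lower antipodal_pair_tv[OF pair assms(1)]]
      antipodal_pair_attains[OF pair assms] by simp
  have "tv_dist P Q = \<epsilon> \<and> chernoff P Q = chernoff_min \<epsilon>" if "antipodal_pair \<epsilon> P Q" for P Q
    using antipodal_pair_tv[OF that assms(1)] antipodal_pair_attains[OF that assms] min by simp
  then show ?thesis
    using min pair unfolding chernoff_tv_value_def antipodal_pair_def by blast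
qed

end
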